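(* Let $V$ be a set of program variables and let $F$ be a downward closed hyper-assertion (i.e. $S\in F$ and $S'\subseteq S$ imply $S'\in F$) such that for all sets of extended states $S,S'$ with $S\approx_V S'$ we have $S\in F\iff S'\in F$. Then there exists $F_{\max}\subseteq F$ such that $F=\bigcup_{f\in F_{\max}}\mathcal{P}(f)$ and every $f\in F_{\max}$ satisfies: for all $\Lambda,s,s',h,\epsilon$ with $s(x)=s'(x)$ for all $x\notin V$, $\langle\Lambda,\langle s,h\rangle_\epsilon\rangle\in f\iff\langle\Lambda,\langle s',h\rangle_\epsilon\rangle\in f$.
   Context: An extended state is $\langle\Lambda,\langle s,h\rangle_\epsilon\rangle$ with logical store $\Lambda:\mathrm{LVars}\to\mathbb{N}$, program store $s:\mathrm{PVars}\to\mathbb{N}$ (total), heap $h$ a finite partial function from $\mathbb{N}$ to $\mathbb{N}\cup\{\bot\}$, and label $\epsilon\in\{\mathrm{ok},\mathrm{er},\mathrm{uk}\}$. A hyper-assertion is a set of sets of extended states; $\mathcal{P}(f)$ denotes the powerset of $f$. For sets of extended states, $S\precsim_V S'$ means: for every $\langle\Lambda,\langle s,h\rangle_\epsilon\rangle\in S$ there is $s'$ with $s'(x)=s(x)$ for all $x\notin V$ and $\langle\Lambda,\langle s',h\rangle_\epsilon\rangle\in S'$; and $S\approx_V S'$ means $S\precsim_V S'$ and $S'\precsim_V S$. *)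

theory Defs
  imports Main "HOL-Library.Finite_Map"
begin

datatype label = Ok | Er | Uk

text \<open>Heap: finite partial map from nat to (nat \<union> {bot}); bot is represented by None.\<close>
type_synonym heap = "(nat, nat option) fmap"

text \<open>Extended state <Lambda, <s,h>_eps>: logical store, program store, heap, label.\<close>
type_synonym ('lv, 'pv) ext_state = "('lv \<Rightarrow> nat) \<times> ('pv \<Rightarrow> nat) \<times> heap \<times> label"

type_synonym ('lv, 'pv) hyper_assertion = "('lv, 'pv) ext_state set set"

definition precsim :: "('lv, 'pv) ext_state set \<Rightarrow> 'pv set \<Rightarrow> ('lv, 'pv) ext_state set \<Rightarrow> bool" where
  "precsim S V S' \<longleftrightarrow>
     (\<forall>L s h e. (L, s, h, e) \<in> S \<longrightarrow>
        (\<exists>s'. (\<forall>x. x \<notin> V \<longrightarrow> s' x = s x) \<and> (L, s', h, e) \<in> S'))"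

definition approx_V :: "('lv, 'pv) ext_state set \<Rightarrow> 'pv set \<Rightarrow> ('lv, 'pv) ext_state set \<Rightarrow> bool" where
  "approx_V S V S' \<longleftrightarrow> precsim S V S' \<and> precsim S' V S"

definition downward_closed :: "('lv, 'pv) hyper_assertion \<Rightarrow> bool" where
  "downward_closed F \<longleftrightarrow> (\<forall>S S'. S \<in> F \<longrightarrow> S' \<subseteq> S \<longrightarrow> S' \<in> F)"

end

theory Submission
  imports Defs
begin

text \<open>Each S in F is V-equivalent to its closure under arbitrary changes of the program store
  on V, so that closure lies in F as well. The closures of the members of F are therefore the
  maximal elements sought, and F, being downward closed, is the union of their powersets.\<close>

definition V_closure :: "'pv set \<Rightarrow> ('lv, 'pv) ext_state set \<Rightarrow> ('lv, 'pv) ext_state set" where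
  "V_closure V S = {(L, s', h, e) | L s s' h e. (L, s, h, e) \<in> S \<and> (\<forall>x. x \<notin> V \<longrightarrow> s' x = s x)}"

lemma subset_V_closure: "S \<subseteq> V_closure V S"
  unfolding V_closure_def by fastforce

lemma approx_V_V_closure: "approx_V S V (V_closure V S)"
  unfolding approx_V_def precsim_def V_closure_def by fastforce

lemma V_closure_mem_iff_agree_outside:
  assumes "\<forall>x. x \<notin> V \<longrightarrow> s x = s' x"
  shows "(L, s, h, e) \<in> V_closure V S \<longleftrightarrow> (L, s', h, e) \<in> V_closure V S"
  using assms unfolding V_closure_def by fastforce

lemma V_closure_mem:
  assumes "\<And>S S'. approx_V S V S' \<Longrightarrow> (S \<in> F \<longleftrightarrow> S' \<in> F)" and "S \<in> F"
  shows "V_closure V S \<in> F"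
  using assms(1)[OF approx_V_V_closure] assms(2) by simp

lemma downward_closed_eq_Union_Pow:
  assumes "downward_closed F" and "G \<subseteq> F" and "\<And>S. S \<in> F \<Longrightarrow> \<exists>f\<in>G. S \<subseteq> f"
  shows "F = (\<Union>f\<in>G. Pow f)"
proof
  show "F \<subseteq> (\<Union>f\<in>G. Pow f)"
    using assms(3) by blast
  show "(\<Union>f\<in>G. Pow f) \<subseteq> F"
    using assms(1,2) unfolding downward_closed_def by blast
qed

theorem lemmaB1:
  fixes V :: "'pv set" and F :: "('lv, 'pv) hyper_assertion"
  assumes "downward_closed F"
    and "\<And>S S'. approx_V S V S' \<Longrightarrow> (S \<in> F \<longleftrightarrow> S' \<in> F)"
  shows "\<exists>Fmax. Fmax \<subseteq> F \<and> F = (\<Union>f\<in>Fmax. Pow f) \<and>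
     (\<forall>f\<in>Fmax. \<forall>L s s' h e. (\<forall>x. x \<notin> V \<longrightarrow> s x = s' x) \<longrightarrow>
        ((L, s, h, e) \<in> f \<longleftrightarrow> (L, s', h, e) \<in> f))"
proof (intro exI[of _ "V_closure V ` F"] conjI)
  show closures_in_F: "V_closure V ` F \<subseteq> F"
    using V_closure_mem[OF assms(2)] by blast
  show "F = (\<Union>f\<in>V_closure V ` F. Pow f)"
    using downward_closed_eq_Union_Pow[OF assms(1) closures_in_F] subset_V_closure by blast
  show "\<forall>f\<in>V_closure V ` F. \<forall>L s s' h e. (\<forall>x. x \<notin> V \<longrightarrow> s x = s' x) \<longrightarrow>
      ((L, s, h, e) \<in> f \<longleftrightarrow> (L, s', h, e) \<in> f)"
    using V_closure_mem_iff_agree_outside by blast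
qed

end
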